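(* Let $M^7=\mathbb CP^2\times S^3=(\mathrm{SU}_3/\mathrm U_2)\times\mathrm{SU}_2$ with an invariant Riemannian metric $g=g_4+g_3$, where $g_4$ is a positive multiple $a$ of the Fubini–Study metric and $g_3=\sum_{i=1}^3c_i\,\beta^i\otimes\beta^i$ ($c_i>0$) for a left-invariant coframe $\beta^1,\beta^2,\beta^3$ on $\mathrm{SU}_2$ with $d\beta^1=-\beta^2\wedge\beta^3$, $d\beta^2=-\beta^3\wedge\beta^1$, $d\beta^3=-\beta^1\wedge\beta^2$. Let $\mathrm{vol}_3=\sqrt{c_1c_2c_3}\,\beta^1\wedge\beta^2\wedge\beta^3$, let $\omega$ be the invariant Kähler form of $(\mathbb CP^2,g_4)$, $\mathrm{vol}_4$ the volume form of $g_4$ for the orientation in which $\omega$ is anti-self-dual, and orient $M^7$ by $\mathrm{vol}_4\wedge\mathrm{vol}_3$. Then the $(\mathrm{SU}_3\times\mathrm{SU}_2)$-invariant special 3-forms $\phi$ on $(M^7,g)$ (i.e. $d\star_7\phi=0$ and $d\phi=f\star_7\phi$ for a constant $f$) are exactly the following: - if $f=0$: $\phi=b\,\mathrm{vol}_3$ with $b$ constant; - if $f\neq0$: $\phi=\omega\wedge\theta$ with $\theta=\sum_i\theta_i\beta^i$ ($\theta_i$ constants) satisfying $\big(f-\sqrt{c_1/(c_2c_3)}\big)\theta_1=0$, $\big(f-\sqrt{c_2/(c_3c_1)}\big)\theta_2=0$, $\big(f-\sqrt{c_3/(c_1c_2)}\big)\theta_3=0$.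
   Context: Hodge star $\star_7$ of $(M^7,g)$ defined by $\alpha\wedge\star\beta=\langle\alpha,\beta\rangle\mathrm{vol}$ with $\langle\alpha,\beta\rangle=\frac1{k!}g(\alpha,\beta)$ on $k$-forms and $\mathrm{vol}=\mathrm{vol}_4\wedge\mathrm{vol}_3$. Every invariant 3-form on $M^7$ has the form $\omega\wedge\theta+b\,\mathrm{vol}_3$ with $\theta$ a left-invariant 1-form on $\mathrm{SU}_2$ and $b$ constant. *)

theory Defs
  imports Complex_Main
begin

text \<open>
  Algebraic model of the (SU3 x SU2)-invariant differential forms on
  M^7 = CP^2 x S^3.  The SU3-invariant forms on CP^2 are spanned by
  e_0 = 1, e_1 = omega (the Kaehler form), e_2 = vol_4; the SU2 left-invariant
  forms on S^3 are spanned by beta^S = beta^{i1} ^ ... ^ beta^{ir}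
  (S = {i1 < ... < ir} a subset of {1,2,3}).  An invariant form is encoded by
  its constant coefficients  A k S  with respect to the basis  e_k ^ beta^S.
\<close>

type_synonym form = "nat \<Rightarrow> nat set \<Rightarrow> real"

definition wf :: "form \<Rightarrow> bool" where
  "wf A \<longleftrightarrow> (\<forall>k S. A k S \<noteq> 0 \<longrightarrow> k \<le> 2 \<and> S \<subseteq> {1,2,3})"

definition homog :: "nat \<Rightarrow> form \<Rightarrow> bool" where
  "homog p A \<longleftrightarrow> (\<forall>k S. A k S \<noteq> 0 \<longrightarrow> 2 * k + card S = p)"

definition fzero :: form where "fzero = (\<lambda>k S. 0)"
definition fadd :: "form \<Rightarrow> form \<Rightarrow> form" where "fadd A B = (\<lambda>k S. A k S + B k S)"
definition fdiff :: "form \<Rightarrow> form \<Rightarrow> form" where "fdiff A B = (\<lambda>k S. A k S - B k S)"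
definition smul :: "real \<Rightarrow> form \<Rightarrow> form" where "smul r A = (\<lambda>k S. r * A k S)"

definition bas :: "nat \<Rightarrow> nat set \<Rightarrow> form" where
  "bas k S = (\<lambda>j U. if j = k \<and> U = S then 1 else 0)"

text \<open>sign of beta^S ^ beta^T = eps S T * beta^(S Un T) for disjoint S, T\<close>
definition eps :: "nat set \<Rightarrow> nat set \<Rightarrow> real" where
  "eps S T = (-1) ^ card {(i, j). i \<in> S \<and> j \<in> T \<and> j < i}"

text \<open>wedge table on CP^2 side: e_0 unit, omega ^ omega = -2 vol_4
  (omega anti-self-dual w.r.t. vol_4, |omega|^2 = 2), all else zero\<close>
definition c4 :: "nat \<Rightarrow> nat \<Rightarrow> nat \<Rightarrow> real" where
  "c4 k l j = (if k = 0 \<and> l = j then 1 else if l = 0 \<and> k = j then 1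
               else if k = 1 \<and> l = 1 \<and> j = 2 then -2 else 0)"

text \<open>wedge product (the CP^2 factors have even degree and commute with the beta's)\<close>
definition wedge :: "form \<Rightarrow> form \<Rightarrow> form" where
  "wedge A B = (\<lambda>j U. if j \<le> 2 \<and> U \<subseteq> {1,2,3} then
      (\<Sum>k\<in>{0..2::nat}. \<Sum>l\<in>{0..2::nat}. c4 k l j *
         (\<Sum>S\<in>Pow U. eps S (U - S) * A k S * B l (U - S)))
    else 0)"

text \<open>pointwise inner product  <a,b> = (1/k!) g(a,b)  of the metric
  g = g_4 + sum c_i beta^i (x) beta^i: |1|^2 = 1, |omega|^2 = 2, |vol_4|^2 = 1,
  |beta^i|^2 = 1/c_i, and the basis e_k ^ beta^S is orthogonal\<close>
definition n4 :: "nat \<Rightarrow> real" where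
  "n4 k = (if k = 1 then 2 else 1)"

definition finner :: "(nat \<Rightarrow> real) \<Rightarrow> form \<Rightarrow> form \<Rightarrow> real" where
  "finner c A B = (\<Sum>k\<in>{0..2::nat}. \<Sum>S\<in>Pow {1,2,3::nat}.
      n4 k * (\<Prod>i\<in>S. 1 / c i) * A k S * B k S)"

definition omega :: form where "omega = bas 1 {}"

definition vol3 :: "(nat \<Rightarrow> real) \<Rightarrow> form" where
  "vol3 c = smul (sqrt (c 1 * c 2 * c 3)) (bas 0 {1,2,3})"

definition vol4 :: form where "vol4 = bas 2 {}"

definition vol :: "(nat \<Rightarrow> real) \<Rightarrow> form" where
  "vol c = wedge vol4 (vol3 c)"

definition hstar :: "(nat \<Rightarrow> real) \<Rightarrow> nat \<Rightarrow> form \<Rightarrow> form" where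
  "hstar c p B = (THE P. wf P \<and> homog (7 - p) P \<and>
      (\<forall>A. wf A \<and> homog p A \<longrightarrow> wedge A P = smul (finner c A B) (vol c)))"

text \<open>exterior derivative: d omega = 0, d vol_4 = 0,
  d beta^1 = - beta^2 ^ beta^3, d beta^2 = - beta^3 ^ beta^1, d beta^3 = - beta^1 ^ beta^2,
  extended by the Leibniz rule\<close>
definition beta :: "nat \<Rightarrow> form" where "beta i = bas 0 {i}"

definition dbeta :: "nat \<Rightarrow> form" where
  "dbeta i = (if i = 1 then smul (-1) (wedge (beta 2) (beta 3))
        else if i = 2 then smul (-1) (wedge (beta 3) (beta 1))
        else if i = 3 then smul (-1) (wedge (beta 1) (beta 2)) else fzero)"

fun blist :: "nat list \<Rightarrow> form" where
  "blist [] = bas 0 {}"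
| "blist (i # is) = wedge (beta i) (blist is)"

fun dlist :: "nat list \<Rightarrow> form" where
  "dlist [] = fzero"
| "dlist (i # is) = fdiff (wedge (dbeta i) (blist is)) (wedge (beta i) (dlist is))"

definition dform :: "form \<Rightarrow> form" where
  "dform A = (\<lambda>j U. \<Sum>k\<in>{0..2::nat}. \<Sum>S\<in>Pow {1,2,3::nat}.
      A k S * wedge (bas k {}) (dlist (sorted_list_of_set S)) j U)"

definition theta1 :: "real \<Rightarrow> real \<Rightarrow> real \<Rightarrow> form" where
  "theta1 t1 t2 t3 = fadd (smul t1 (beta 1)) (fadd (smul t2 (beta 2)) (smul t3 (beta 3)))"

definition special :: "(nat \<Rightarrow> real) \<Rightarrow> form \<Rightarrow> real \<Rightarrow> bool" where
  "special c phi f \<longleftrightarrow> dform (hstar c 3 phi) = fzero \<and> dform phi = smul f (hstar c 3 phi)"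

end

theory Submission
  imports Defs
begin

(* An invariant 3-form is  phi = b beta^123 + omega ^ theta  with  theta = sum t_i beta^i,
   and an invariant 4-form is  p vol_4 + omega ^ (q_1 beta^23 + q_2 beta^13 + q_3 beta^12).
   Testing  alpha ^ *phi = <alpha,phi> vol  against the four basis 3-forms gives, with
   r = sqrt (c_1 c_2 c_3),
     *phi = (b/r) vol_4 + omega ^ (- t_1 r/c_1 beta^23 + t_2 r/c_2 beta^13 - t_3 r/c_3 beta^12).
   Every invariant 4-form is closed, so  d*phi = 0  holds automatically, while
   d phi = omega ^ d theta = omega ^ (- t_1 beta^23 + t_2 beta^13 - t_3 beta^12).
   Hence  d phi = f *phi  says  f b = 0  and  (f - c_i/r) t_i = 0,  where
   c_i/r = sqrt (c_i/(c_j c_k)).  For f = 0 this kills theta, for f <> 0 it kills b. *)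

lemma mult_if_zero: "x * (if P then y else 0) = (if P then x * y else (0::'a::mult_zero))"
  by simp

lemma sum_if_zero: "(\<Sum>x\<in>A. if P then f x else 0) = (if P then sum f A else 0)"
  by simp

lemma sum_atLeast0_2: "(\<Sum>k\<in>{0..2::nat}. g k) = g 0 + g 1 + g 2"
  by (simp add: numeral_2_eq_2 atLeast0AtMost atMost_Suc algebra_simps)

lemma sum_Pow_insert:
  assumes "finite A" "a \<notin> A"
  shows "sum f (Pow (insert a A)) = sum f (Pow A) + sum (\<lambda>S. f (insert a S)) (Pow A)"
proof -
  have "Pow A \<inter> insert a ` Pow A = {}" using assms by auto
  moreover have "inj_on (insert a) (Pow A)"
    by (rule inj_onI) (use assms in \<open>auto simp: insert_ident subset_iff\<close>)
  ultimately show ?thesis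
    using assms by (simp add: Pow_insert sum.union_disjoint sum.reindex)
qed

lemma insert_eq_insert_iff_subsets:
  "insert a A = insert b B \<longleftrightarrow> insert a A \<subseteq> insert b B \<and> insert b B \<subseteq> insert a A"
  by blast

lemma subset_123_cases:
  assumes "S \<subseteq> {1,2,3::nat}"
  shows "S = {} \<or> S = {1} \<or> S = {2} \<or> S = {3} \<or> S = {1,2} \<or> S = {1,3} \<or> S = {2,3} \<or> S = {1,2,3}"
proof -
  from assms have "S \<in> Pow {1,2,3}" by simp
  then show ?thesis by (simp add: Pow_insert insert_commute)
qed

lemma div_sqrt_prod:
  fixes x y z :: real
  assumes "x > 0" "y > 0" "z > 0"
  shows "x / sqrt (x * y * z) = sqrt (x / (y * z))"
proof -
  have "x / (y * z) = x\<^sup>2 / (x * y * z)"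
    using assms by (simp add: power2_eq_square)
  then show ?thesis
    using assms by (simp add: real_sqrt_divide)
qed

lemma eq_mult_div_iff: "s \<noteq> 0 \<Longrightarrow> t = f * t / s \<longleftrightarrow> (f - s) * t = (0::real)"
  by (auto simp: field_simps)

lemma smul_smul: "smul a (smul b A) = smul (a * b) A"
  by (simp add: smul_def mult.assoc)

lemma smul_bas_eq_iff: "smul x (bas k S) = smul y (bas k S) \<longleftrightarrow> x = y"
proof
  assume "smul x (bas k S) = smul y (bas k S)"
  then have "smul x (bas k S) k S = smul y (bas k S) k S" by simp
  then show "x = y" by (simp add: smul_def bas_def)
qed simp

lemma wedge_smul_left: "wedge (smul a A) B = smul a (wedge A B)"
  unfolding wedge_def smul_def by (intro ext) (simp add: sum_distrib_left algebra_simps)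
lemma wedge_smul_right: "wedge A (smul a B) = smul a (wedge A B)"
  unfolding wedge_def smul_def by (intro ext) (simp add: sum_distrib_left algebra_simps)
lemma wedge_fadd_left: "wedge (fadd A B) C = fadd (wedge A C) (wedge B C)"
  unfolding wedge_def fadd_def by (intro ext) (simp add: sum.distrib algebra_simps)
lemma wedge_fadd_right: "wedge A (fadd B C) = fadd (wedge A B) (wedge A C)"
  unfolding wedge_def fadd_def by (intro ext) (simp add: sum.distrib algebra_simps)
lemma wedge_fdiff_left: "wedge (fdiff A B) C = fdiff (wedge A C) (wedge B C)"
  unfolding wedge_def fdiff_def by (intro ext) (simp add: sum_subtractf algebra_simps)
lemma wedge_fdiff_right: "wedge A (fdiff B C) = fdiff (wedge A B) (wedge A C)"
  unfolding wedge_def fdiff_def by (intro ext) (simp add: sum_subtractf algebra_simps)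
lemma wedge_fzero_left: "wedge fzero A = fzero"
  unfolding wedge_def fzero_def by (intro ext) simp
lemma wedge_fzero_right: "wedge A fzero = fzero"
  unfolding wedge_def fzero_def by (intro ext) simp

lemmas wedge_linear = wedge_smul_left wedge_smul_right wedge_fadd_left wedge_fadd_right
  wedge_fdiff_left wedge_fdiff_right wedge_fzero_left wedge_fzero_right

lemma dform_smul: "dform (smul a A) = smul a (dform A)"
  unfolding dform_def smul_def by (intro ext) (simp add: sum_distrib_left algebra_simps)
lemma dform_fadd: "dform (fadd A B) = fadd (dform A) (dform B)"
  unfolding dform_def fadd_def by (intro ext) (simp add: sum.distrib algebra_simps)

lemma sum_Pow_bas_bas:
  assumes "finite U"
  shows "(\<Sum>S'\<in>Pow U. eps S' (U - S') * bas k S k' S' * bas l T l' (U - S'))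
     = (if k' = k then if l' = l then if S \<subseteq> U \<and> T = U - S then eps S T else 0 else 0 else 0)"
proof -
  have "(\<Sum>S'\<in>Pow U. eps S' (U - S') * bas k S k' S' * bas l T l' (U - S'))
     = (\<Sum>S'\<in>Pow U. if S' = S then (if k' = k \<and> l' = l \<and> T = U - S then eps S T else 0) else 0)"
    by (rule sum.cong) (auto simp: bas_def)
  then show ?thesis using assms by simp
qed

lemma wedge_bas_bas: "wedge (bas k S) (bas l T) =
  (if S \<inter> T = {} \<and> S \<union> T \<subseteq> {1,2,3} \<and> k + l \<le> 2
   then smul (c4 k l (k + l) * eps S T) (bas (k + l) (S \<union> T)) else fzero)"
proof (intro ext)
  fix j U
  show "wedge (bas k S) (bas l T) j U = (if S \<inter> T = {} \<and> S \<union> T \<subseteq> {1,2,3} \<and> k + l \<le> 2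
    then smul (c4 k l (k + l) * eps S T) (bas (k + l) (S \<union> T)) else fzero) j U"
  proof (cases "j \<le> 2 \<and> U \<subseteq> {1,2,3}")
    case True
    then have "finite U" using finite_subset by blast
    then have "wedge (bas k S) (bas l T) j U
        = (if k \<le> 2 \<and> l \<le> 2 \<and> S \<subseteq> U \<and> T = U - S then c4 k l j * eps S T else 0)"
      unfolding wedge_def if_P[OF True] sum_Pow_bas_bas[OF \<open>finite U\<close>] mult_if_zero
      by (simp only: sum.delta sum_if_zero finite_atLeastAtMost) simp
    then show ?thesis using True by (auto simp: smul_def bas_def fzero_def c4_def)
  qed (auto simp: wedge_def smul_def bas_def fzero_def)
qed

lemma dform_bas: "dform (bas k S) =
  (if k \<le> 2 \<and> S \<subseteq> {1,2,3} then wedge (bas k {}) (dlist (sorted_list_of_set S)) else fzero)"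
proof (intro ext)
  fix j U
  have "bas k S k' S' * X = (if k' = k then if S' = S then X else 0 else 0)" for k' S' X
    by (simp add: bas_def)
  then show "dform (bas k S) j U = (if k \<le> 2 \<and> S \<subseteq> {1,2,3}
      then wedge (bas k {}) (dlist (sorted_list_of_set S)) else fzero) j U"
    unfolding dform_def by (simp only: sum.delta sum_if_zero finite_atLeastAtMost finite_Pow_iff
      finite_insert finite.emptyI) (simp add: fzero_def)
qed

lemma eps_eq_card_pairs: "eps S T = (-1) ^ card {a. a \<in> S \<times> T \<and> snd a < fst a}"
  unfolding eps_def by (rule arg_cong[where f = "\<lambda>n. (-1) ^ card n"]) auto
lemma Collect_eq_or_conj: "{a. (a = x \<or> P a) \<and> Q a} = (if Q x then insert x {a. P a \<and> Q a} else {a. P a \<and> Q a})"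
  by auto
lemma Collect_eq_conj: "{a. a = x \<and> Q a} = (if Q x then {x} else {})"
  by auto

lemmas eps_simps = eps_eq_card_pairs Collect_eq_or_conj Collect_eq_conj

definition form3 :: "real \<Rightarrow> real \<Rightarrow> real \<Rightarrow> real \<Rightarrow> form" where
  "form3 b t1 t2 t3 = fadd (smul b (bas 0 {1,2,3}))
     (fadd (smul t1 (bas 1 {1})) (fadd (smul t2 (bas 1 {2})) (smul t3 (bas 1 {3}))))"

definition form4 :: "real \<Rightarrow> real \<Rightarrow> real \<Rightarrow> real \<Rightarrow> form" where
  "form4 p q1 q2 q3 = fadd (smul p (bas 2 {}))
     (fadd (smul q1 (bas 1 {2,3})) (fadd (smul q2 (bas 1 {1,3})) (smul q3 (bas 1 {1,2}))))"

lemma form3_apply: "form3 b t1 t2 t3 k S =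
    (if k = 0 \<and> S = {1,2,3} then b else 0) + (if k = 1 \<and> S = {1} then t1 else 0)
  + (if k = 1 \<and> S = {2} then t2 else 0) + (if k = 1 \<and> S = {3} then t3 else 0)"
  by (simp add: form3_def fadd_def smul_def bas_def)

lemma form4_apply: "form4 p q1 q2 q3 k S =
    (if k = 2 \<and> S = {} then p else 0) + (if k = 1 \<and> S = {2,3} then q1 else 0)
  + (if k = 1 \<and> S = {1,3} then q2 else 0) + (if k = 1 \<and> S = {1,2} then q3 else 0)"
  by (simp add: form4_def fadd_def smul_def bas_def)

lemma form3_eq_iff:
  "form3 b t1 t2 t3 = form3 b' t1' t2' t3' \<longleftrightarrow> b = b' \<and> t1 = t1' \<and> t2 = t2' \<and> t3 = t3'"
proof
  assume h: "form3 b t1 t2 t3 = form3 b' t1' t2' t3'"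
  have "form3 b t1 t2 t3 k S = form3 b' t1' t2' t3' k S" for k S
    using h by simp
  from this[of 0 "{1,2,3}"] this[of 1 "{1}"] this[of 1 "{2}"] this[of 1 "{3}"]
  show "b = b' \<and> t1 = t1' \<and> t2 = t2' \<and> t3 = t3'"
    unfolding form3_apply by (simp add: insert_eq_insert_iff_subsets)
qed simp

lemma form4_eq_iff:
  "form4 p q1 q2 q3 = form4 p' q1' q2' q3' \<longleftrightarrow> p = p' \<and> q1 = q1' \<and> q2 = q2' \<and> q3 = q3'"
proof
  assume h: "form4 p q1 q2 q3 = form4 p' q1' q2' q3'"
  have "form4 p q1 q2 q3 k S = form4 p' q1' q2' q3' k S" for k S
    using h by simp
  from this[of 2 "{}"] this[of 1 "{2,3}"] this[of 1 "{1,3}"] this[of 1 "{1,2}"]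
  show "p = p' \<and> q1 = q1' \<and> q2 = q2' \<and> q3 = q3'"
    unfolding form4_apply by (simp add: insert_eq_insert_iff_subsets)
qed simp

lemma wf_form3: "wf (form3 b t1 t2 t3)" and homog_form3: "homog 3 (form3 b t1 t2 t3)"
  unfolding wf_def homog_def form3_apply by auto

lemma wf_form4: "wf (form4 p q1 q2 q3)" and homog_form4: "homog 4 (form4 p q1 q2 q3)"
  unfolding wf_def homog_def form4_apply by auto

lemma form3_coordinates:
  assumes "wf A" "homog 3 A"
  shows "A = form3 (A 0 {1,2,3}) (A 1 {1}) (A 1 {2}) (A 1 {3})"
proof (intro ext)
  fix k S
  show "A k S = form3 (A 0 {1,2,3}) (A 1 {1}) (A 1 {2}) (A 1 {3}) k S"
  proof (cases "A k S = 0")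
    case False
    with assms have k: "k \<le> 2" and S: "S \<subseteq> {1,2,3}" and card: "2 * k + card S = 3"
      unfolding wf_def homog_def by auto
    from subset_123_cases[OF S] k card show ?thesis
      unfolding form3_apply by (auto simp: insert_eq_insert_iff_subsets; presburger)
  qed (auto simp: form3_apply)
qed

lemma form4_coordinates:
  assumes "wf A" "homog 4 A"
  shows "A = form4 (A 2 {}) (A 1 {2,3}) (A 1 {1,3}) (A 1 {1,2})"
proof (intro ext)
  fix k S
  show "A k S = form4 (A 2 {}) (A 1 {2,3}) (A 1 {1,3}) (A 1 {1,2}) k S"
  proof (cases "A k S = 0")
    case False
    with assms have k: "k \<le> 2" and S: "S \<subseteq> {1,2,3}" and card: "2 * k + card S = 4"
      unfolding wf_def homog_def by auto
    from subset_123_cases[OF S] k card show ?thesis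
      unfolding form4_apply by (auto simp: insert_eq_insert_iff_subsets; presburger)
  qed (auto simp: form4_apply)
qed

lemma wedge_form3_form4: "wedge (form3 a0 a1 a2 a3) (form4 p q1 q2 q3) =
    smul (a0 * p - 2 * a1 * q1 + 2 * a2 * q2 - 2 * a3 * q3) (bas 2 {1,2,3})"
  unfolding form3_def form4_def wedge_linear wedge_bas_bas
  by (simp add: eps_simps c4_def Int_insert_left insert_commute)
    (intro ext, simp add: fadd_def smul_def bas_def fzero_def)

lemma finner_form3_form3: "finner c (form3 a0 a1 a2 a3) (form3 b0 b1 b2 b3) =
    a0 * b0 / (c 1 * c 2 * c 3) + 2 * a1 * b1 / c 1 + 2 * a2 * b2 / c 2 + 2 * a3 * b3 / c 3"
  unfolding finner_def sum_atLeast0_2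
  by (simp add: sum_Pow_insert form3_apply n4_def insert_eq_insert_iff_subsets card_Pow del: Pow_empty)

lemma vol_eq: "vol c = smul (sqrt (c 1 * c 2 * c 3)) (bas 2 {1,2,3})"
  unfolding vol_def vol3_def vol4_def wedge_linear wedge_bas_bas
  by (simp add: eps_simps c4_def smul_def)

lemma wedge_form3_form4_eq_smul_vol_iff:
  "wedge (form3 a0 a1 a2 a3) (form4 p q1 q2 q3) = smul x (vol c) \<longleftrightarrow>
     a0 * p - 2 * a1 * q1 + 2 * a2 * q2 - 2 * a3 * q3 = x * sqrt (c 1 * c 2 * c 3)"
  unfolding wedge_form3_form4 vol_eq smul_smul smul_bas_eq_iff ..

lemma hstar_form3:
  assumes c: "c 1 > 0" "c 2 > 0" "c 3 > 0"
  defines "r \<equiv> sqrt (c 1 * c 2 * c 3)"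
  shows "hstar c 3 (form3 b t1 t2 t3) =
    form4 (b / r) (- t1 * r / c 1) (t2 * r / c 2) (- t3 * r / c 3)"
proof -
  have r: "r > 0" "r * r = c 1 * c 2 * c 3"
    unfolding r_def using c by simp_all
  let ?phi = "form3 b t1 t2 t3"
  let ?P = "form4 (b / r) (- t1 * r / c 1) (t2 * r / c 2) (- t3 * r / c 3)"
  have dual: "wedge (form3 a0 a1 a2 a3) ?P = smul (finner c (form3 a0 a1 a2 a3) ?phi) (vol c)"
    for a0 a1 a2 a3
  proof -
    have b_div_r: "b / r = b * r / (c 1 * c 2 * c 3)"
      using r c by (simp add: field_simps)
    show ?thesis
      unfolding wedge_form3_form4_eq_smul_vol_iff finner_form3_form3 r_def[symmetric] b_div_r
      using c by (simp add: field_simps)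
  qed
  have unique: "P = ?P"
    if P: "wf P" "homog 4 P"
      and dual_P: "\<forall>A. wf A \<and> homog 3 A \<longrightarrow> wedge A P = smul (finner c A ?phi) (vol c)" for P
  proof -
    obtain p q1 q2 q3 where P_eq: "P = form4 p q1 q2 q3"
      using form4_coordinates[OF P] by blast
    have "wedge (form3 a0 a1 a2 a3) (form4 p q1 q2 q3) =
        smul (finner c (form3 a0 a1 a2 a3) ?phi) (vol c)" for a0 a1 a2 a3
      using dual_P wf_form3 homog_form3 unfolding P_eq by blast
    then have "a0 * p - 2 * a1 * q1 + 2 * a2 * q2 - 2 * a3 * q3 =
        (a0 * b / (c 1 * c 2 * c 3) + 2 * a1 * t1 / c 1 + 2 * a2 * t2 / c 2 + 2 * a3 * t3 / c 3) * r"
      for a0 a1 a2 a3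
      unfolding wedge_form3_form4_eq_smul_vol_iff finner_form3_form3 r_def[symmetric] .
    from this[of 1 0 0 0] this[of 0 1 0 0] this[of 0 0 1 0] this[of 0 0 0 1]
    have "p = b * r / (c 1 * c 2 * c 3)" "q1 = - t1 * r / c 1" "q2 = t2 * r / c 2" "q3 = - t3 * r / c 3"
      by simp_all
    moreover have "b * r / (c 1 * c 2 * c 3) = b / r"
      using r c by (simp add: field_simps)
    ultimately show ?thesis
      unfolding P_eq by simp
  qed
  have "\<forall>A. wf A \<and> homog 3 A \<longrightarrow> wedge A ?P = smul (finner c A ?phi) (vol c)"
    using dual form3_coordinates by metis
  then show ?thesis
    unfolding hstar_def using unique wf_form4 homog_form4 by (intro the_equality) auto
qed

lemma dform_form3: "dform (form3 b t1 t2 t3) = form4 0 (- t1) t2 (- t3)"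
  unfolding form3_def dform_fadd dform_smul dform_bas
  by (simp add: dbeta_def beta_def wedge_linear wedge_bas_bas eps_simps c4_def)
    (intro ext, simp add: form4_def fadd_def fdiff_def smul_def bas_def fzero_def
      insert_eq_insert_iff_subsets)

lemma dform_form4: "dform (form4 p q1 q2 q3) = fzero"
  unfolding form4_def dform_fadd dform_smul dform_bas
  by (simp add: dbeta_def beta_def wedge_linear wedge_bas_bas eps_simps c4_def)
    (intro ext, simp add: fadd_def fdiff_def smul_def bas_def fzero_def insert_eq_insert_iff_subsets)

lemma smul_form4: "smul f (form4 p q1 q2 q3) = form4 (f * p) (f * q1) (f * q2) (f * q3)"
  unfolding form4_def by (intro ext) (simp add: fadd_def smul_def algebra_simps)

lemma fzero_eq_form4: "fzero = form4 0 0 0 0"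
  unfolding form4_def by (intro ext) (simp add: fadd_def smul_def fzero_def)

lemma wedge_omega_theta1: "wedge omega (theta1 t1 t2 t3) = form3 0 t1 t2 t3"
  unfolding omega_def theta1_def beta_def wedge_linear wedge_bas_bas
  by (simp add: eps_simps c4_def)
    (intro ext, simp add: form3_def fadd_def smul_def bas_def fzero_def insert_eq_insert_iff_subsets)

lemma smul_vol3: "smul b (vol3 c) = form3 (b * sqrt (c 1 * c 2 * c 3)) 0 0 0"
  unfolding vol3_def form3_def by (intro ext) (simp add: fadd_def smul_def)

lemma form3_eq_smul_vol3_iff:
  assumes "c 1 > 0" "c 2 > 0" "c 3 > 0"
  shows "(\<exists>b'. form3 b t1 t2 t3 = smul b' (vol3 c)) \<longleftrightarrow> t1 = 0 \<and> t2 = 0 \<and> t3 = 0"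
proof
  assume "t1 = 0 \<and> t2 = 0 \<and> t3 = 0"
  then have "form3 b t1 t2 t3 = smul (b / sqrt (c 1 * c 2 * c 3)) (vol3 c)"
    unfolding smul_vol3 form3_eq_iff using assms by simp
  then show "\<exists>b'. form3 b t1 t2 t3 = smul b' (vol3 c)" ..
qed (auto simp: smul_vol3 form3_eq_iff)

lemma special_form3_iff:
  assumes c: "c 1 > 0" "c 2 > 0" "c 3 > 0"
  shows "special c (form3 b t1 t2 t3) f \<longleftrightarrow> f * b = 0 \<and>
    (f - sqrt (c 1 / (c 2 * c 3))) * t1 = 0 \<and>
    (f - sqrt (c 2 / (c 3 * c 1))) * t2 = 0 \<and>
    (f - sqrt (c 3 / (c 1 * c 2))) * t3 = 0"
proof -
  define r where "r = sqrt (c 1 * c 2 * c 3)"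
  have "r > 0"
    unfolding r_def using c by simp
  have s: "c 1 / r = sqrt (c 1 / (c 2 * c 3))" "c 2 / r = sqrt (c 2 / (c 3 * c 1))"
    "c 3 / r = sqrt (c 3 / (c 1 * c 2))"
    unfolding r_def using div_sqrt_prod c by (metis mult.commute mult.left_commute)+
  have "special c (form3 b t1 t2 t3) f \<longleftrightarrow> f * (b / r) = 0 \<and>
      t1 = f * (t1 / (c 1 / r)) \<and> t2 = f * (t2 / (c 2 / r)) \<and> t3 = f * (t3 / (c 3 / r))"
    unfolding special_def hstar_form3[OF c] r_def[symmetric] dform_form3 dform_form4
      smul_form4 fzero_eq_form4 form4_eq_iff by auto
  then show ?thesis
    unfolding s using \<open>r > 0\<close> c by (simp add: eq_mult_div_iff)
qed

theorem proposition5p1: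
  fixes c :: "nat \<Rightarrow> real" and phi :: form and f :: real
  assumes "c 1 > 0" and "c 2 > 0" and "c 3 > 0"
    and "wf phi" and "homog 3 phi"
  shows "special c phi f \<longleftrightarrow>
    ((f = 0 \<and> (\<exists>b. phi = smul b (vol3 c))) \<or>
     (f \<noteq> 0 \<and> (\<exists>t1 t2 t3. phi = wedge omega (theta1 t1 t2 t3) \<and>
        (f - sqrt (c 1 / (c 2 * c 3))) * t1 = 0 \<and>
        (f - sqrt (c 2 / (c 3 * c 1))) * t2 = 0 \<and>
        (f - sqrt (c 3 / (c 1 * c 2))) * t3 = 0)))"
proof -
  obtain b t1 t2 t3 where phi: "phi = form3 b t1 t2 t3"
    using form3_coordinates[OF assms(4,5)] by blast
  have s_pos: "sqrt (c 1 / (c 2 * c 3)) > 0" "sqrt (c 2 / (c 3 * c 1)) > 0" "sqrt (c 3 / (c 1 * c 2)) > 0"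
    using assms(1-3) by simp_all
  show ?thesis
    unfolding phi special_form3_iff[OF assms(1-3)] form3_eq_smul_vol3_iff[OF assms(1-3)]
      wedge_omega_theta1 form3_eq_iff
    using s_pos by auto
qed

end
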